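(* PINT-pos can produce false positives in both tasks: (i) there exist two isomorphic temporal graphs that PINT-pos distinguishes (classifies as non-isomorphic); (ii) there exist a temporal graph and two inherently indistinguishable temporal link prediction problems in it that PINT-pos distinguishes.
   Context: A temporal graph $G(t)$ has a finite node set and a finite chronological list of timed edge-addition events $e_{uv,t'}$ ($t'\le t$), with node and event attributes from a finite set. Two temporal graphs are isomorphic if there is a bijection of their nodes preserving node attributes at all times and mapping events to events with the same times and attributes. A model $f$ assigns embeddings $f(G)_u(t')$; it distinguishes $G_1(t),G_2(t)$ unless some node bijection $\pi$ gives $f(G_1)_u(t')=f(G_2)_{\pi(u)}(t')$ for all $u$ and $t'\le t$; it distinguishes node pairs $(u_1,v_1),(u_2,v_2)$ of $G(t)$ unless $f(G)_{u_1}(t')=f(G)_{u_2}(t')$ and $f(G)_{v_1}(t')=f(G)_{v_2}(t')$ for all $t'\le t$. Two link prediction problems $(u_1,v_1),(u_2,v_2)$ on $G(t)$ are inherently indistinguishable if adding the event $e_{u_1v_1,t}$ to $G$ and adding the event $e_{u_2v_2,t}$ to $G$ yield isomorphic temporal graphs. PINT: base RNN embeddings $h^0_u$ updated injectively at each event from $(h^0_u,h^0_v,\Phi(e_{uv,t}))$, followed by injective neighbor aggregation layers $h^k_u(t)=\mathrm{COMBINE}^k(h^{k-1}_u(t),\mathrm{AGG}^k(\{\!\{(h^{k-1}_v(t),\Phi(e_{uv,t'}))\}\!\}))$, where $\Phi$ injectively encodes event attribute and time. PINT-pos is PINT augmented with positional features: given a fixed labeling of the nodes by $1,\dots,n$,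 each node $u$ receives a feature vector indexed by the node labels whose entries count (temporal) walks from $u$ to each labeled node (e.g. for walks of length one, the row of the current adjacency matrix indexed by $u$), and these features are incorporated injectively into the node embeddings. *)

theory Defs
  imports Complex_Main "HOL-Library.Multiset"
begin

text \<open>Nodes are 0,...,nn-1 (these numbers are also the fixed labeling used by the
positional features). An event (u, v, s, a) is the
edge-addition event e_{uv,s} with attribute a.\<close>

type_synonym 'e event = "nat \<times> nat \<times> real \<times> 'e"

record ('x, 'e) tgraph =
  nn    :: nat
  nattr :: "nat \<Rightarrow> real \<Rightarrow> 'x"
  evs   :: "'e event list"

definition ev_src :: "'e event \<Rightarrow> nat" where "ev_src e = fst e"
definition ev_dst :: "'e event \<Rightarrow> nat" where "ev_dst e = fst (snd e)"
definition ev_time :: "'e event \<Rightarrow> real" where "ev_time e = fst (snd (snd e))"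
definition ev_attr :: "'e event \<Rightarrow> 'e" where "ev_attr e = snd (snd (snd e))"

definition wf_tg :: "('x, 'e) tgraph \<Rightarrow> real \<Rightarrow> bool" where
  "wf_tg G t \<longleftrightarrow> sorted (map ev_time (evs G))
     \<and> (\<forall>e \<in> set (evs G). ev_src e < nn G \<and> ev_dst e < nn G \<and> ev_time e \<le> t)"

definition map_event :: "(nat \<Rightarrow> nat) \<Rightarrow> 'e event \<Rightarrow> 'e event" where
  "map_event \<pi> e = (\<pi> (ev_src e), \<pi> (ev_dst e), ev_time e, ev_attr e)"

definition tg_iso :: "('x, 'e) tgraph \<Rightarrow> ('x, 'e) tgraph \<Rightarrow> bool" where
  "tg_iso G1 G2 \<longleftrightarrow> (\<exists>\<pi>. bij_betw \<pi> {..<nn G1} {..<nn G2}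
      \<and> (\<forall>u < nn G1. \<forall>\<tau>. nattr G1 u \<tau> = nattr G2 (\<pi> u) \<tau>)
      \<and> mset (map (map_event \<pi>) (evs G1)) = mset (evs G2))"

definition add_event :: "('x, 'e) tgraph \<Rightarrow> nat \<Rightarrow> nat \<Rightarrow> real \<Rightarrow> 'e \<Rightarrow> ('x, 'e) tgraph" where
  "add_event G u v t a = G\<lparr>evs := evs G @ [(u, v, t, a)]\<rparr>"

definition inherently_indist ::
  "('x, 'e) tgraph \<Rightarrow> real \<Rightarrow> 'e \<Rightarrow> nat \<times> nat \<Rightarrow> nat \<times> nat \<Rightarrow> bool" where
  "inherently_indist G t a p1 p2 \<longleftrightarrow>
     tg_iso (add_event G (fst p1) (snd p1) t a) (add_event G (fst p2) (snd p2) t a)"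

type_synonym ('x, 'e, 'o) model = "('x, 'e) tgraph \<Rightarrow> nat \<Rightarrow> real \<Rightarrow> 'o"

definition distinguishes_graphs ::
  "('x, 'e, 'o) model \<Rightarrow> ('x, 'e) tgraph \<Rightarrow> ('x, 'e) tgraph \<Rightarrow> real \<Rightarrow> bool" where
  "distinguishes_graphs f G1 G2 t \<longleftrightarrow>
     \<not> (\<exists>\<pi>. bij_betw \<pi> {..<nn G1} {..<nn G2}
          \<and> (\<forall>u < nn G1. \<forall>t' \<le> t. f G1 u t' = f G2 (\<pi> u) t'))"

definition distinguishes_pairs ::
  "('x, 'e, 'o) model \<Rightarrow> ('x, 'e) tgraph \<Rightarrow> real \<Rightarrow> nat \<times> nat \<Rightarrow> nat \<times> nat \<Rightarrow> bool" where
  "distinguishes_pairs f G t p1 p2 \<longleftrightarrow>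
     \<not> (\<forall>t' \<le> t. f G (fst p1) t' = f G (fst p2) t' \<and> f G (snd p1) t' = f G (snd p2) t')"

definition evs_upto :: "('x, 'e) tgraph \<Rightarrow> real \<Rightarrow> 'e event list" where
  "evs_upto G t' = filter (\<lambda>e. ev_time e \<le> t') (evs G)"

text \<open>Base (memory/RNN) embeddings: every node starts at state init; at each event
e_{uv,s} both endpoints are updated by upd from (own state, other state, Phi(attr,time)).\<close>
definition mem_step :: "('h \<Rightarrow> 'h \<Rightarrow> 'p \<Rightarrow> 'h) \<Rightarrow> ('e \<Rightarrow> real \<Rightarrow> 'p)
     \<Rightarrow> (nat \<Rightarrow> 'h) \<Rightarrow> 'e event \<Rightarrow> (nat \<Rightarrow> 'h)" where
  "mem_step upd \<Phi> m e =
     (let u = ev_src e; v = ev_dst e; p = \<Phi> (ev_attr e) (ev_time e)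
      in m(u := upd (m u) (m v) p, v := upd (m v) (m u) p))"

definition memory :: "'h \<Rightarrow> ('h \<Rightarrow> 'h \<Rightarrow> 'p \<Rightarrow> 'h) \<Rightarrow> ('e \<Rightarrow> real \<Rightarrow> 'p)
     \<Rightarrow> ('x, 'e) tgraph \<Rightarrow> real \<Rightarrow> nat \<Rightarrow> 'h" where
  "memory init upd \<Phi> G t' = foldl (mem_step upd \<Phi>) (\<lambda>_. init) (evs_upto G t')"

definition nbr_events :: "('x, 'e) tgraph \<Rightarrow> real \<Rightarrow> nat \<Rightarrow> (nat \<times> 'e event) multiset" where
  "nbr_events G t' u =
     mset ([(ev_dst e, e). e \<leftarrow> evs_upto G t', ev_src e = u]
         @ [(ev_src e, e). e \<leftarrow> evs_upto G t', ev_dst e = u])"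

text \<open>Layer embeddings h^k_u(t'). Layer 0 injectively combines the memory state with the
node attribute; layer k+1 uses COMBINE/AGG (merged into one function comb k).\<close>
fun pint_layer :: "'h \<Rightarrow> ('h \<Rightarrow> 'h \<Rightarrow> 'p \<Rightarrow> 'h) \<Rightarrow> ('e \<Rightarrow> real \<Rightarrow> 'p)
     \<Rightarrow> ('h \<Rightarrow> 'x \<Rightarrow> 'h) \<Rightarrow> (nat \<Rightarrow> 'h \<Rightarrow> ('h \<times> 'p) multiset \<Rightarrow> 'h)
     \<Rightarrow> nat \<Rightarrow> ('x, 'e) tgraph \<Rightarrow> nat \<Rightarrow> real \<Rightarrow> 'h" where
  "pint_layer init upd \<Phi> in0 comb 0 G u t' =
     in0 (memory init upd \<Phi> G t' u) (nattr G u t')"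
| "pint_layer init upd \<Phi> in0 comb (Suc k) G u t' =
     comb k (pint_layer init upd \<Phi> in0 comb k G u t')
       (image_mset (\<lambda>(v, e). (pint_layer init upd \<Phi> in0 comb k G v t', \<Phi> (ev_attr e) (ev_time e)))
          (nbr_events G t' u))"

definition ev_connects :: "'e event \<Rightarrow> nat \<Rightarrow> nat \<Rightarrow> bool" where
  "ev_connects e a b \<longleftrightarrow> (ev_src e = a \<and> ev_dst e = b) \<or> (ev_src e = b \<and> ev_dst e = a)"

text \<open>Temporal walks of length L from u to j using events of time \<le> t':
a list of event indices es (times nondecreasing) and the visited node list ws.\<close>
definition temporal_walks :: "('x, 'e) tgraph \<Rightarrow> real \<Rightarrow> nat \<Rightarrow> nat \<Rightarrow> nat
     \<Rightarrow> (nat list \<times> nat list) set" where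
  "temporal_walks G t' L u j = {(es, ws).
      length es = L \<and> length ws = Suc L \<and> ws ! 0 = u \<and> ws ! L = j
      \<and> (\<forall>k < L. es ! k < length (evs G) \<and> ev_time (evs G ! (es ! k)) \<le> t'
                  \<and> ev_connects (evs G ! (es ! k)) (ws ! k) (ws ! Suc k))
      \<and> sorted (map (\<lambda>i. ev_time (evs G ! i)) es)}"

definition pos_feat :: "nat \<Rightarrow> ('x, 'e) tgraph \<Rightarrow> nat \<Rightarrow> real \<Rightarrow> (nat \<Rightarrow> nat)" where
  "pos_feat L G u t' = (\<lambda>j. if j < nn G then card (temporal_walks G t' L u j) else 0)"

definition pint_pos :: "nat \<Rightarrow> nat \<Rightarrow> 'h \<Rightarrow> ('h \<Rightarrow> 'h \<Rightarrow> 'p \<Rightarrow> 'h) \<Rightarrow> ('e \<Rightarrow> real \<Rightarrow> 'p)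
     \<Rightarrow> ('h \<Rightarrow> 'x \<Rightarrow> 'h) \<Rightarrow> (nat \<Rightarrow> 'h \<Rightarrow> ('h \<times> 'p) multiset \<Rightarrow> 'h)
     \<Rightarrow> ('h \<Rightarrow> (nat \<Rightarrow> nat) \<Rightarrow> 'o) \<Rightarrow> ('x, 'e, 'o) model" where
  "pint_pos L K init upd \<Phi> in0 comb out G u t' =
     out (pint_layer init upd \<Phi> in0 comb K G u t') (pos_feat L G u t')"

definition pint_pos_injective :: "('h \<Rightarrow> 'h \<Rightarrow> 'p \<Rightarrow> 'h) \<Rightarrow> ('e \<Rightarrow> real \<Rightarrow> 'p)
     \<Rightarrow> ('h \<Rightarrow> 'x \<Rightarrow> 'h) \<Rightarrow> (nat \<Rightarrow> 'h \<Rightarrow> ('h \<times> 'p) multiset \<Rightarrow> 'h)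
     \<Rightarrow> ('h \<Rightarrow> (nat \<Rightarrow> nat) \<Rightarrow> 'o) \<Rightarrow> bool" where
  "pint_pos_injective upd \<Phi> in0 comb out \<longleftrightarrow>
     inj (\<lambda>(a, b, c). upd a b c) \<and> inj (\<lambda>(a, s). \<Phi> a s) \<and> inj (\<lambda>(h, x). in0 h x)
     \<and> (\<forall>k. inj (\<lambda>(h, M). comb k h M)) \<and> inj (\<lambda>(h, z). out h z)"

end

theory Submission
  imports Defs
begin

text \<open>Positional features are indexed by a fixed labeling of the nodes and therefore are not
equivariant under relabeling. On two nodes carrying only self-loop events, a temporal walk of
positive length from u never leaves u and exists iff u has a loop; so the feature vector of u is
nonzero exactly at label u, and only if u has a loop. A loop at node 0 and a loop at node 1 give
isomorphic graphs (swap the nodes), but no node of the second has the features of node 0 of the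
first. With loops at both nodes, adding a loop at 0 or at 1 gives isomorphic graphs, yet nodes 0
and 1 have different features. Injectivity of the readout carries these differences into the
embeddings.\<close>

lemma finite_temporal_walks: "finite (temporal_walks G t' L u j)"
proof -
  let ?V = "insert u (ev_src ` set (evs G) \<union> ev_dst ` set (evs G))"
  let ?Es = "{es. set es \<subseteq> {..<length (evs G)} \<and> length es = L}"
  let ?Ws = "{ws. set ws \<subseteq> ?V \<and> length ws = Suc L}"
  have "(es, ws) \<in> ?Es \<times> ?Ws" if walk: "(es, ws) \<in> temporal_walks G t' L u j" for es ws
  proof -
    have len: "length es = L" "length ws = Suc L"
      using walk by (simp_all add: temporal_walks_def)
    have nodes: "ws ! k \<in> ?V" if "k \<le> L" for k
    proof (cases k)
      case 0
      then show ?thesis using walk by (simp add: temporal_walks_def)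
    next
      case (Suc i)
      then have "evs G ! (es ! i) \<in> set (evs G)"
          and "ev_connects (evs G ! (es ! i)) (ws ! i) (ws ! k)"
        using walk that by (auto simp: temporal_walks_def)
      then show ?thesis unfolding ev_connects_def by (metis UnI1 UnI2 image_eqI insertI2)
    qed
    have "set ws \<subseteq> ?V"
    proof
      fix x assume "x \<in> set ws"
      then obtain k where "k < length ws" "ws ! k = x" by (auto simp: in_set_conv_nth)
      then show "x \<in> ?V" using nodes[of k] len by simp
    qed
    moreover have "set es \<subseteq> {..<length (evs G)}"
      using walk by (auto simp: temporal_walks_def in_set_conv_nth)
    ultimately show ?thesis using len by simp
  qed
  then have "temporal_walks G t' L u j \<subseteq> ?Es \<times> ?Ws"
    by (simp add: subset_iff split_paired_all)
  moreover have "finite (?Es \<times> ?Ws)"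
    by (intro finite_cartesian_product finite_lists_length_eq) auto
  ultimately show ?thesis by (rule finite_subset)
qed

lemma pos_feat_eq_0_iff:
  "pos_feat L G u t' j = 0 \<longleftrightarrow> nn G \<le> j \<or> temporal_walks G t' L u j = {}"
  by (simp add: pos_feat_def finite_temporal_walks)

lemma self_loop_in_temporal_walks:
  assumes "i < length (evs G)" "ev_src (evs G ! i) = u" "ev_dst (evs G ! i) = u"
    and "ev_time (evs G ! i) \<le> t'"
  shows "(replicate L i, replicate (Suc L) u) \<in> temporal_walks G t' L u u"
  using assms by (auto simp: temporal_walks_def ev_connects_def nth_Cons')

lemma temporal_walk_self_loops_end:
  assumes "\<forall>e \<in> set (evs G). ev_src e = ev_dst e"
    and walk: "(es, ws) \<in> temporal_walks G t' L u j"
  shows "j = u"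
proof -
  have "ws ! k = u" if "k \<le> L" for k
    using that
  proof (induction k)
    case 0
    then show ?case using walk by (simp add: temporal_walks_def)
  next
    case (Suc k)
    then have "es ! k < length (evs G)" "ev_connects (evs G ! (es ! k)) (ws ! k) (ws ! Suc k)"
      using walk by (auto simp: temporal_walks_def)
    then show ?case using Suc assms(1) by (auto simp: ev_connects_def)
  qed
  then show ?thesis using walk by (auto simp: temporal_walks_def)
qed

lemma temporal_walk_start_touched:
  assumes "(es, ws) \<in> temporal_walks G t' L u j" "L \<ge> 1"
  shows "\<exists>e \<in> set (evs G). ev_src e = u \<or> ev_dst e = u"
proof -
  have "es ! 0 < length (evs G)" "ev_connects (evs G ! (es ! 0)) (ws ! 0) (ws ! 1)" "ws ! 0 = u"
    using assms unfolding temporal_walks_def by (auto dest!: spec[of _ 0])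
  then show ?thesis by (auto simp: ev_connects_def)
qed

lemma pint_pos_eq_imp_pos_feat_eq:
  assumes "pint_pos_injective upd \<Phi> in0 comb out"
    and "pint_pos L K init upd \<Phi> in0 comb out G u t'
         = pint_pos L K init upd \<Phi> in0 comb out G' u' t'"
  shows "pos_feat L G u t' = pos_feat L G' u' t'"
proof -
  have "inj (\<lambda>(h, z). out h z)" using assms(1) by (simp add: pint_pos_injective_def)
  then show ?thesis using assms(2) unfolding pint_pos_def
    by (auto dest: injD[where x="(_, _)" and y="(_, _)"])
qed

lemma distinguishes_graphs_pint_pos:
  assumes "pint_pos_injective upd \<Phi> in0 comb out" "u < nn G1"
    and "\<forall>v. pos_feat L G1 u t \<noteq> pos_feat L G2 v t"
  shows "distinguishes_graphs (pint_pos L K init upd \<Phi> in0 comb out) G1 G2 t"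
  unfolding distinguishes_graphs_def
proof
  let ?f = "pint_pos L K init upd \<Phi> in0 comb out"
  assume "\<exists>\<pi>. bij_betw \<pi> {..<nn G1} {..<nn G2}
            \<and> (\<forall>u < nn G1. \<forall>t' \<le> t. ?f G1 u t' = ?f G2 (\<pi> u) t')"
  then obtain \<pi> where "?f G1 u t = ?f G2 (\<pi> u) t"
    using assms(2) by blast
  then have "pos_feat L G1 u t = pos_feat L G2 (\<pi> u) t"
    by (rule pint_pos_eq_imp_pos_feat_eq[OF assms(1)])
  with assms(3) show False by blast
qed

lemma distinguishes_pairs_pint_pos:
  assumes "pint_pos_injective upd \<Phi> in0 comb out"
    and "pos_feat L G u1 t \<noteq> pos_feat L G u2 t"
  shows "distinguishes_pairs (pint_pos L K init upd \<Phi> in0 comb out) G t (u1, v1) (u2, v2)"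
  unfolding distinguishes_pairs_def
proof
  let ?f = "pint_pos L K init upd \<Phi> in0 comb out"
  assume "\<forall>t' \<le> t. ?f G (fst (u1, v1)) t' = ?f G (fst (u2, v2)) t'
                    \<and> ?f G (snd (u1, v1)) t' = ?f G (snd (u2, v2)) t'"
  then have "?f G u1 t = ?f G u2 t" by simp
  then have "pos_feat L G u1 t = pos_feat L G u2 t"
    by (rule pint_pos_eq_imp_pos_feat_eq[OF assms(1)])
  with assms(2) show False ..
qed

definition loop_graph :: "nat list \<Rightarrow> ('x, 'e) tgraph" where
  "loop_graph us =
     \<lparr>nn = 2, nattr = (\<lambda>_ _. undefined), evs = map (\<lambda>u. (u, u, 0, undefined)) us\<rparr>"

lemma wf_tg_loop_graph: "set us \<subseteq> {..<2} \<Longrightarrow> wf_tg (loop_graph us) 0"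
  by (auto simp: wf_tg_def loop_graph_def ev_time_def ev_src_def ev_dst_def comp_def
      map_replicate_const)

lemma add_event_loop_graph: "add_event (loop_graph us) u u 0 undefined = loop_graph (us @ [u])"
  by (simp add: add_event_def loop_graph_def)

lemma tg_iso_loop_graph_swap:
  assumes "mset (map (\<lambda>u. 1 - u) us) = mset vs"
  shows "tg_iso (loop_graph us :: ('x, 'e) tgraph) (loop_graph vs)"
  unfolding tg_iso_def
proof (intro exI conjI)
  show "bij_betw (\<lambda>u. 1 - u) {..<nn (loop_graph us)} {..<nn (loop_graph vs)}"
    by (rule bij_betw_byWitness[where f'="\<lambda>u. 1 - u"]) (auto simp: loop_graph_def)
  have "mset (map (map_event (\<lambda>u. 1 - u)) (evs (loop_graph us :: ('x, 'e) tgraph)))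
        = image_mset (\<lambda>u. (u, u, 0, undefined)) (mset (map (\<lambda>u. 1 - u) us))"
    by (simp add: loop_graph_def map_event_def ev_src_def ev_dst_def ev_time_def ev_attr_def
        multiset.map_comp comp_def)
  also have "\<dots> = mset (evs (loop_graph vs))"
    by (simp only: assms) (simp add: loop_graph_def)
  finally show "mset (map (map_event (\<lambda>u. 1 - u)) (evs (loop_graph us :: ('x, 'e) tgraph)))
                = mset (evs (loop_graph vs))" .
qed (simp add: loop_graph_def)

lemma pos_feat_loop_graph_eq_0_iff:
  assumes "L \<ge> 1" "0 \<le> t'" "j < 2"
  shows "pos_feat L (loop_graph us :: ('x, 'e) tgraph) u t' j = 0
         \<longleftrightarrow> j \<noteq> u \<or> u \<notin> set us"
proof -
  let ?G = "loop_graph us :: ('x, 'e) tgraph"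
  have "temporal_walks ?G t' L u j \<noteq> {} \<longleftrightarrow> j = u \<and> u \<in> set us"
  proof
    assume "temporal_walks ?G t' L u j \<noteq> {}"
    then obtain es ws where walk: "(es, ws) \<in> temporal_walks ?G t' L u j"
      by (auto simp flip: ex_in_conv)
    have "j = u"
      by (rule temporal_walk_self_loops_end[OF _ walk])
        (auto simp: loop_graph_def ev_src_def ev_dst_def)
    moreover have "u \<in> set us"
      using temporal_walk_start_touched[OF walk assms(1)]
      by (auto simp: loop_graph_def ev_src_def ev_dst_def)
    ultimately show "j = u \<and> u \<in> set us" ..
  next
    assume "j = u \<and> u \<in> set us"
    then obtain i where "i < length us" "us ! i = u" "j = u" by (auto simp: in_set_conv_nth)
    then have "(replicate L i, replicate (Suc L) u) \<in> temporal_walks ?G t' L u u"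
      using assms(2) by (intro self_loop_in_temporal_walks)
        (auto simp: loop_graph_def ev_src_def ev_dst_def ev_time_def)
    with \<open>j = u\<close> show "temporal_walks ?G t' L u j \<noteq> {}" by auto
  qed
  then show ?thesis using assms(3) by (auto simp: pos_feat_eq_0_iff loop_graph_def)
qed

lemma pint_pos_distinguishes_loop_graphs:
  fixes init :: 'h and \<Phi> :: "'e \<Rightarrow> real \<Rightarrow> 'p" and out :: "'h \<Rightarrow> (nat \<Rightarrow> nat) \<Rightarrow> 'o"
  assumes "L \<ge> 1" "pint_pos_injective upd \<Phi> in0 comb out"
  shows "distinguishes_graphs (pint_pos L K init upd \<Phi> in0 comb out)
           (loop_graph [0] :: ('x, 'e) tgraph) (loop_graph [1]) 0"
proof (rule distinguishes_graphs_pint_pos[OF assms(2), where u = 0])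
  let ?G1 = "loop_graph [0] :: ('x, 'e) tgraph" and ?G2 = "loop_graph [1] :: ('x, 'e) tgraph"
  have "pos_feat L ?G1 0 0 0 \<noteq> 0" "pos_feat L ?G2 v 0 0 = 0" for v
    using assms(1) by (auto simp: pos_feat_loop_graph_eq_0_iff)
  then show "\<forall>v. pos_feat L ?G1 0 0 \<noteq> pos_feat L ?G2 v 0"
    by (auto dest: fun_cong[where x = 0])
qed (simp add: loop_graph_def)

lemma pint_pos_distinguishes_loop_pairs:
  fixes init :: 'h and \<Phi> :: "'e \<Rightarrow> real \<Rightarrow> 'p" and out :: "'h \<Rightarrow> (nat \<Rightarrow> nat) \<Rightarrow> 'o"
  assumes "L \<ge> 1" "pint_pos_injective upd \<Phi> in0 comb out"
  shows "distinguishes_pairs (pint_pos L K init upd \<Phi> in0 comb out)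
           (loop_graph [0, 1] :: ('x, 'e) tgraph) 0 (0, 0) (1, 1)"
proof (rule distinguishes_pairs_pint_pos[OF assms(2)])
  let ?G = "loop_graph [0, 1] :: ('x, 'e) tgraph"
  have "pos_feat L ?G 0 0 1 = 0" "pos_feat L ?G 1 0 1 \<noteq> 0"
    using assms(1) by (auto simp: pos_feat_loop_graph_eq_0_iff)
  then show "pos_feat L ?G 0 0 \<noteq> pos_feat L ?G 1 0"
    by (auto dest: fun_cong[where x = 1])
qed

theorem proposition4:
  shows "(\<exists>(G1 :: ('x, 'e) tgraph) G2 t.
            wf_tg G1 t \<and> wf_tg G2 t \<and> tg_iso G1 G2 \<and>
            (\<forall>L K (init :: 'h) upd (\<Phi> :: 'e \<Rightarrow> real \<Rightarrow> 'p) in0 comb (out :: 'h \<Rightarrow> (nat \<Rightarrow> nat) \<Rightarrow> 'o).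
               L \<ge> 1 \<and> pint_pos_injective upd \<Phi> in0 comb out \<longrightarrow>
               distinguishes_graphs (pint_pos L K init upd \<Phi> in0 comb out) G1 G2 t))
       \<and> (\<exists>(G :: ('x, 'e) tgraph) t a u1 v1 u2 v2.
            wf_tg G t \<and> u1 < nn G \<and> v1 < nn G \<and> u2 < nn G \<and> v2 < nn G \<and>
            inherently_indist G t a (u1, v1) (u2, v2) \<and>
            (\<forall>L K (init :: 'h) upd (\<Phi> :: 'e \<Rightarrow> real \<Rightarrow> 'p) in0 comb (out :: 'h \<Rightarrow> (nat \<Rightarrow> nat) \<Rightarrow> 'o).
               L \<ge> 1 \<and> pint_pos_injective upd \<Phi> in0 comb out \<longrightarrow>
               distinguishes_pairs (pint_pos L K init upd \<Phi> in0 comb out) G t (u1, v1) (u2, v2)))"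
proof -
  let ?G1 = "loop_graph [0] :: ('x, 'e) tgraph"
  let ?G2 = "loop_graph [1] :: ('x, 'e) tgraph"
  let ?G = "loop_graph [0, 1] :: ('x, 'e) tgraph"
  have wf: "wf_tg ?G1 0" "wf_tg ?G2 0" "wf_tg ?G 0"
    by (simp_all add: wf_tg_loop_graph)
  have nodes: "0 < nn ?G" "1 < nn ?G"
    by (simp_all add: loop_graph_def)
  have iso: "tg_iso ?G1 ?G2"
    by (rule tg_iso_loop_graph_swap) simp
  have indist: "inherently_indist ?G 0 undefined (0, 0) (1, 1)"
    unfolding inherently_indist_def by (simp add: add_event_loop_graph tg_iso_loop_graph_swap)
  note distinguishes =
    pint_pos_distinguishes_loop_graphs[where 'x = 'x and 'e = 'e and 'h = 'h and 'p = 'p and 'o = 'o]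
    pint_pos_distinguishes_loop_pairs[where 'x = 'x and 'e = 'e and 'h = 'h and 'p = 'p and 'o = 'o]
  show ?thesis
    apply (intro conjI)
     apply (rule exI[of _ ?G1], rule exI[of _ ?G2], rule exI[of _ 0])
     using wf iso distinguishes(1) apply blast
    apply (rule exI[of _ ?G], rule exI[of _ 0], rule exI[of _ undefined], rule exI[of _ 0],
        rule exI[of _ 0], rule exI[of _ 1], rule exI[of _ 1])
    using wf nodes indist distinguishes(2) apply blast
    done
qed

end
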